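(* Let $\mathcal{G}$, $A$ and $L_k$ be as in the context, and for $\Phi\in\mathcal{O}_{\mathcal{I}}^+(n,k)$ let $\Phi^{\mathrm{cut}}(\Phi)=\|I-\Phi^TA\Phi\|$ and $\Phi^{\mathrm{cut}}_{\mathcal{G}}=\inf_{\Phi\in\mathcal{O}_{\mathcal{I}}^+(n,k)}\|I-\Phi^TA\Phi\|$. Then: (i) $\Phi^{\mathrm{cut}}\ge0$ and $\Phi^{\mathrm{cut}}$ is invariant under renumberings of the nodes (i.e. $\|I-(P\Phi)^T(PAP^T)(P\Phi)\|=\|I-\Phi^TA\Phi\|$ for every permutation matrix $P$); (ii) $\Phi^{\mathrm{cut}}_{\mathcal{G}}=0$ if and only if $\mathcal{G}$ is $k$-partitionable; (iii) the Cheeger inequality $L_k=\min_{Y^TY=I}\|I-Y^TAY\|\le\Phi^{\mathrm{cut}}_{\mathcal{G}}$ holds.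
   Context: $\mathcal{G}$ is an undirected graph on $n$ nodes with symmetric, entrywise nonnegative adjacency matrix $B$ with zero diagonal; $d=B(1,\dots,1)^T$ is assumed entrywise positive, $D=\operatorname{diag}(d)$, $A=D^{-1/2}BD^{-1/2}$ with eigenvalues $\lambda_1\ge\cdots\ge\lambda_n$ ($\lambda_1=1$), $L_k=\min_{Y\in\mathbb{R}^{n\times k},Y^TY=I}\|I-Y^TAY\|=\big(\sum_{\nu=2}^k(1-\lambda_\nu)^2\big)^{1/2}$, and $\|\cdot\|$ is the Frobenius norm. A matrix $X\in\mathbb{R}^{n\times k}$ is in indicator form if there is a partition of $\{1,\dots,n\}$ into $k$ disjoint nonempty sets $R_1,\dots,R_k$ such that $X_{pj}\neq0$ if and only if $p\in R_j$. $\mathcal{O}_{\mathcal{I}}(n,k)$ is the set of matrices in indicator form with $X^TX=I$, and $\mathcal{O}_{\mathcal{I}}^+(n,k)$ the set of entrywise nonnegative matrices in $\mathcal{O}_{\mathcal{I}}(n,k)$. The graph is $k$-partitionable if it has at least $k$ connected components. *)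

theory Defs
  imports "HOL-Analysis.Analysis" "HOL-Combinatorics.Permutations"
begin

text \<open>Matrices are HOL-Analysis vectors of vectors: an n x k matrix is real^'k^'n.
  The norm of a matrix (as an element of real^'k^'k) is exactly its Frobenius norm.\<close>

definition graph_adj :: "real^'n^'n \<Rightarrow> bool" where
  "graph_adj B \<longleftrightarrow> transpose B = B \<and> (\<forall>i j. B $ i $ j \<ge> 0) \<and> (\<forall>i. B $ i $ i = 0)
     \<and> (\<forall>i. (B *v (\<chi> j. 1)) $ i > 0)"

definition deg :: "real^'n^'n \<Rightarrow> real^'n" where
  "deg B = B *v (\<chi> j. 1)"

definition norm_adj :: "real^'n^'n \<Rightarrow> real^'n^'n" where
  "norm_adj B = (\<chi> i j. B $ i $ j / (sqrt (deg B $ i) * sqrt (deg B $ j)))"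

definition indicator_form :: "real^'k^'n \<Rightarrow> bool" where
  "indicator_form X \<longleftrightarrow> (\<exists>R :: 'k \<Rightarrow> 'n set.
      (\<forall>j. R j \<noteq> {}) \<and> (\<forall>i j. i \<noteq> j \<longrightarrow> R i \<inter> R j = {}) \<and> (\<Union>j. R j) = UNIV
      \<and> (\<forall>p j. X $ p $ j \<noteq> 0 \<longleftrightarrow> p \<in> R j))"

definition O_I :: "(real^'k^'n) set" where
  "O_I = {X. indicator_form X \<and> transpose X ** X = mat 1}"

definition O_I_plus :: "(real^'k^'n) set" where
  "O_I_plus = {X. X \<in> O_I \<and> (\<forall>p j. X $ p $ j \<ge> 0)}"

definition Phi_cut :: "real^'n^'n \<Rightarrow> real^'k^'n \<Rightarrow> real" where
  "Phi_cut A X = norm (mat 1 - transpose X ** A ** X)"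

definition Phi_cut_G :: "real^'n^'n \<Rightarrow> 'k::finite itself \<Rightarrow> real" where
  "Phi_cut_G A _ = (INF X\<in>(O_I_plus :: (real^'k^'n) set). Phi_cut A X)"

definition L_k :: "real^'n^'n \<Rightarrow> 'k::finite itself \<Rightarrow> real" where
  "L_k A _ = (INF Y\<in>{Y :: real^'k^'n. transpose Y ** Y = mat 1}. norm (mat 1 - transpose Y ** A ** Y))"

definition perm_matrix :: "real^'n^'n \<Rightarrow> bool" where
  "perm_matrix P \<longleftrightarrow> (\<exists>\<sigma>. \<sigma> permutes (UNIV :: 'n set) \<and> P = (\<chi> i j. if j = \<sigma> i then 1 else 0))"

definition edge_rel :: "real^'n^'n \<Rightarrow> 'n rel" where
  "edge_rel B = {(i, j). B $ i $ j \<noteq> 0}"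

definition components :: "real^'n^'n \<Rightarrow> 'n set set" where
  "components B = UNIV // ((edge_rel B)\<^sup>*)"

definition k_partitionable :: "real^'n^'n \<Rightarrow> nat \<Rightarrow> bool" where
  "k_partitionable B k \<longleftrightarrow> card (components B) \<ge> k"

end

theory Submission
  imports Defs
begin

(* For a unit vector x the normalized adjacency matrix satisfies
     1 - x^T A x = 1/2 sum_{p,q} B_pq (x_p / sqrt d_p - x_q / sqrt d_q)^2.
   If the graph has at least k components, group them into k classes R and take as columns the
   normalised vectors D^(1/2) 1_R: every column has zero energy, so X^T A X = I. Conversely, the
   trace of I - X^T A X is at most k times its Frobenius norm, and it is continuous on the compact
   set of nonnegative matrices with orthonormal columns, which contains O_I^+. If the infimum over
   O_I^+ vanishes, the trace vanishes at some such X; its columns divided by sqrt d are then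
   constant along edges, and their supports are k nonempty disjoint unions of components.
   Parts (i) and (iii) only use P^T P = I and the inclusion of O_I^+ in the set over which L_k is
   minimised. *)

lemma transpose_mult_self_eq_mat_1_iff:
  fixes X :: "real^'k^'n"
  shows "transpose X ** X = mat 1 \<longleftrightarrow>
    (\<forall>i j. (\<Sum>p\<in>UNIV. X$p$i * X$p$j) = (if i = j then 1 else 0))"
  by (simp add: vec_eq_iff matrix_matrix_mult_def transpose_def mat_def)

lemma transpose_mult_mult_entry:
  fixes X :: "'a::comm_semiring_1^'k^'n"
  shows "(transpose X ** A ** X) $ i $ j = (\<Sum>p\<in>UNIV. \<Sum>q\<in>UNIV. X$p$i * A$p$q * X$q$j)"
proof -
  have "(transpose X ** A ** X) $ i $ j = (\<Sum>q\<in>UNIV. (\<Sum>p\<in>UNIV. X$p$i * A$p$q) * X$q$j)"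
    unfolding matrix_matrix_mult_def transpose_def by simp
  also have "\<dots> = (\<Sum>q\<in>UNIV. \<Sum>p\<in>UNIV. X$p$i * A$p$q * X$q$j)"
    by (simp add: sum_distrib_right)
  also have "\<dots> = (\<Sum>p\<in>UNIV. \<Sum>q\<in>UNIV. X$p$i * A$p$q * X$q$j)"
    by (rule sum.swap)
  finally show ?thesis .
qed

lemma trace_le_card_mult_norm:
  fixes M :: "real^'k^'k"
  shows "trace M \<le> real CARD('k) * norm M"
proof -
  have "trace M \<le> (\<Sum>j\<in>(UNIV::'k set). norm M)"
    unfolding trace_def
  proof (rule sum_mono)
    fix j
    have "M$j$j \<le> norm (M$j)" using component_le_norm_cart[of "M$j" j] by linarith
    also have "\<dots> \<le> norm M" by (rule Finite_Cartesian_Product.norm_nth_le)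
    finally show "M$j$j \<le> norm M" .
  qed
  then show ?thesis by simp
qed

lemma norm_eq_sqrt_card_if_orthonormal_columns:
  fixes X :: "real^'k^'n"
  assumes "transpose X ** X = mat 1"
  shows "norm X = sqrt (real CARD('k))"
proof -
  have "(norm X)\<^sup>2 = (\<Sum>p\<in>UNIV. \<Sum>j\<in>UNIV. X$p$j * X$p$j)"
    by (simp add: power2_norm_eq_inner inner_vec_def)
  also have "\<dots> = (\<Sum>j\<in>UNIV. \<Sum>p\<in>UNIV. X$p$j * X$p$j)"
    by (rule sum.swap)
  also have "\<dots> = real CARD('k)"
    using assms by (simp add: transpose_mult_self_eq_mat_1_iff)
  finally show ?thesis by (simp add: real_sqrt_unique)
qed

lemma Phi_cut_orthogonal_conj:
  fixes P :: "real^'n^'m" and X :: "real^'k^'n"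
  assumes "transpose P ** P = mat 1"
  shows "Phi_cut (P ** A ** transpose P) (P ** X) = Phi_cut A X"
proof -
  have "transpose (P ** X) ** (P ** A ** transpose P) ** (P ** X)
      = transpose X ** (transpose P ** P) ** A ** (transpose P ** P) ** X"
    by (simp add: matrix_transpose_mul matrix_mul_assoc)
  then show ?thesis by (simp add: assms Phi_cut_def)
qed

lemma perm_matrix_orthogonal:
  fixes P :: "real^'n^'n"
  assumes "perm_matrix P"
  shows "transpose P ** P = mat 1"
proof -
  obtain \<sigma> where \<sigma>: "\<sigma> permutes (UNIV :: 'n set)"
    and P: "P = (\<chi> i j. if j = \<sigma> i then 1 else 0)"
    using assms unfolding perm_matrix_def by blast
  have "(\<Sum>p\<in>UNIV. P$p$i * P$p$j) = (if i = j then 1 else 0)" for i j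
  proof -
    let ?\<delta> = "\<lambda>r. if i = r \<and> j = r then 1 else (0::real)"
    have "(\<Sum>p\<in>UNIV. P$p$i * P$p$j) = (\<Sum>p\<in>UNIV. ?\<delta> (\<sigma> p))"
      by (intro sum.cong) (auto simp: P)
    also have "\<dots> = (\<Sum>r\<in>UNIV. ?\<delta> r)"
      using sum.reindex_bij_betw[OF permutes_imp_bij[OF \<sigma>], of ?\<delta>] by simp
    also have "\<dots> = (if i = j then 1 else 0)"
      by (cases "i = j") (auto intro: sum.neutral)
    finally show ?thesis .
  qed
  then show ?thesis
    by (simp add: transpose_mult_self_eq_mat_1_iff)
qed

section \<open>The Dirichlet form of the normalized adjacency matrix\<close>

lemma graph_adj_sym:
  assumes "graph_adj B"
  shows "B $ q $ p = B $ p $ q"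
proof -
  have "transpose B $ p $ q = B $ p $ q" using assms by (simp add: graph_adj_def)
  then show ?thesis by (simp add: transpose_def)
qed

lemma graph_adj_nonneg: "graph_adj B \<Longrightarrow> 0 \<le> B $ p $ q"
  by (simp add: graph_adj_def)

lemma deg_pos: "graph_adj B \<Longrightarrow> deg B $ p > 0"
  by (simp add: graph_adj_def deg_def)

lemma deg_eq_sum: "deg B $ p = (\<Sum>q\<in>UNIV. B $ p $ q)"
  by (simp add: deg_def matrix_vector_mult_def)

definition dirichlet_energy :: "real^'n::finite^'n \<Rightarrow> ('n \<Rightarrow> real) \<Rightarrow> real" where
  "dirichlet_energy B x =
     (\<Sum>p\<in>UNIV. \<Sum>q\<in>UNIV. B$p$q * (x p / sqrt (deg B $ p) - x q / sqrt (deg B $ q))\<^sup>2)"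

lemma dirichlet_energy_nonneg: "graph_adj B \<Longrightarrow> 0 \<le> dirichlet_energy B x"
  unfolding dirichlet_energy_def by (intro sum_nonneg mult_nonneg_nonneg graph_adj_nonneg) auto

lemma dirichlet_energy_eq_0_iff:
  assumes "graph_adj B"
  shows "dirichlet_energy B x = 0 \<longleftrightarrow>
    (\<forall>p q. B$p$q \<noteq> 0 \<longrightarrow> x p / sqrt (deg B $ p) = x q / sqrt (deg B $ q))"
proof -
  let ?e = "\<lambda>p q. B$p$q * (x p / sqrt (deg B $ p) - x q / sqrt (deg B $ q))\<^sup>2"
  have "0 \<le> ?e p q" for p q by (simp add: graph_adj_nonneg[OF assms])
  then have "dirichlet_energy B x = 0 \<longleftrightarrow> (\<forall>p q. ?e p q = 0)"
    unfolding dirichlet_energy_def by (simp add: sum_nonneg_eq_0_iff sum_nonneg)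
  then show ?thesis by auto
qed

lemma quadratic_form_norm_adj:
  fixes B :: "real^'n::finite^'n"
  assumes g: "graph_adj B"
  shows "(\<Sum>p\<in>UNIV. \<Sum>q\<in>UNIV. x p * norm_adj B $p$q * x q) =
    (\<Sum>p\<in>UNIV. (x p)\<^sup>2) - dirichlet_energy B x / 2"
proof -
  define y where "y p = x p / sqrt (deg B $ p)" for p
  have x_eq: "x p = sqrt (deg B $ p) * y p" for p
    using deg_pos[OF g, of p] by (simp add: y_def)
  have "x p * norm_adj B $p$q * x q = B$p$q * y p * y q" for p q
    using deg_pos[OF g, of p] deg_pos[OF g, of q] by (simp add: y_def norm_adj_def field_simps)
  then have cross: "(\<Sum>p\<in>UNIV. \<Sum>q\<in>UNIV. x p * norm_adj B $p$q * x q)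
      = (\<Sum>p\<in>UNIV. \<Sum>q\<in>UNIV. B$p$q * y p * y q)"
    by simp
  have left: "(\<Sum>p\<in>UNIV. \<Sum>q\<in>UNIV. B$p$q * (y p)\<^sup>2) = (\<Sum>p\<in>UNIV. (x p)\<^sup>2)"
    using deg_pos[OF g] by (simp add: less_imp_le deg_eq_sum[symmetric] sum_distrib_right[symmetric]
        x_eq power_mult_distrib)
  have right: "(\<Sum>p\<in>UNIV. \<Sum>q\<in>UNIV. B$p$q * (y q)\<^sup>2) = (\<Sum>p\<in>UNIV. (x p)\<^sup>2)"
    using left by (subst sum.swap) (simp add: graph_adj_sym[OF g])
  have "dirichlet_energy B x =
      (\<Sum>p\<in>UNIV. \<Sum>q\<in>UNIV. B$p$q * (y p)\<^sup>2) + (\<Sum>p\<in>UNIV. \<Sum>q\<in>UNIV. B$p$q * (y q)\<^sup>2)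
      - 2 * (\<Sum>p\<in>UNIV. \<Sum>q\<in>UNIV. B$p$q * y p * y q)"
    unfolding dirichlet_energy_def y_def[symmetric]
    by (simp add: power2_diff algebra_simps sum.distrib sum_subtractf sum_distrib_left)
  then show ?thesis using cross left right by linarith
qed

lemma diag_defect_eq_dirichlet_energy:
  fixes B :: "real^'n::finite^'n" and X :: "real^'k^'n"
  assumes "graph_adj B" and "(\<Sum>p\<in>UNIV. (X$p$j)\<^sup>2) = 1"
  shows "(mat 1 - transpose X ** norm_adj B ** X) $ j $ j = dirichlet_energy B (\<lambda>p. X$p$j) / 2"
  using quadratic_form_norm_adj[OF assms(1), of "\<lambda>p. X$p$j"] assms(2)
  by (simp add: transpose_mult_mult_entry mat_def)

lemma trace_defect_eq_dirichlet_energy: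
  fixes B :: "real^'n::finite^'n" and X :: "real^'k::finite^'n"
  assumes "graph_adj B" and "transpose X ** X = mat 1"
  shows "trace (mat 1 - transpose X ** norm_adj B ** X) =
    (\<Sum>j\<in>UNIV. dirichlet_energy B (\<lambda>p. X$p$j)) / 2"
proof -
  have "(\<Sum>p\<in>UNIV. (X$p$j)\<^sup>2) = 1" for j
    using assms(2) by (simp add: transpose_mult_self_eq_mat_1_iff power2_eq_square)
  then show ?thesis
    unfolding trace_def sum_divide_distrib by (simp only: diag_defect_eq_dirichlet_energy[OF assms(1)])
qed

lemma card_quotient_rtrancl_ge:
  fixes E :: "'n::finite rel" and T :: "'k::finite \<Rightarrow> 'n set"
  assumes nonempty: "\<And>j. T j \<noteq> {}"
    and disjoint: "\<And>i j. i \<noteq> j \<Longrightarrow> T i \<inter> T j = {}"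
    and closed: "\<And>j. E `` T j \<subseteq> T j"
  shows "CARD('k) \<le> card (UNIV // E\<^sup>*)"
proof -
  define r where "r j = (SOME p. p \<in> T j)" for j
  have r: "r j \<in> T j" for j
    using nonempty[of j] unfolding r_def by (meson ex_in_conv someI_ex)
  define f where "f j = E\<^sup>* `` {r j}" for j
  have "f j \<subseteq> E\<^sup>* `` T j" for j
    unfolding f_def by (rule Image_mono) (simp_all add: r)
  then have f_sub: "f j \<subseteq> T j" for j
    by (simp only: Image_closed_trancl[OF closed])
  have "inj f"
  proof (rule injI)
    fix i j assume "f i = f j"
    moreover have "r j \<in> f j" by (simp add: f_def)
    ultimately have "r j \<in> T i" using f_sub by blast
    then show "i = j" using disjoint r by blast
  qed
  moreover have "f j \<in> UNIV // E\<^sup>*" for j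
    unfolding f_def by (rule quotientI) simp
  ultimately show ?thesis
    by (intro card_inj_on_le[of f]) auto
qed

lemma surj_constant_on_edges_if_card_quotient_ge:
  fixes E :: "'n::finite rel"
  assumes "sym E" and "CARD('k::finite) \<le> card (UNIV // E\<^sup>*)"
  obtains g :: "'n \<Rightarrow> 'k::finite" where "surj g" and "\<And>p q. (p, q) \<in> E \<Longrightarrow> g p = g q"
proof -
  have equiv: "equiv UNIV (E\<^sup>*)"
    by (intro equivI refl_rtrancl sym_rtrancl[OF assms(1)] trans_rtrancl) auto
  obtain f :: "'k \<Rightarrow> 'n set" where f: "range f \<subseteq> UNIV // E\<^sup>*" "inj f"
    using card_le_inj[of "UNIV :: 'k set" "UNIV // E\<^sup>*"] assms(2) by auto
  define g where "g p = inv f (E\<^sup>* `` {p})" for p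
  have "\<exists>p. g p = j" for j
  proof -
    have "f j \<in> UNIV // E\<^sup>*" using f(1) by blast
    then obtain p where "f j = E\<^sup>* `` {p}" by (rule quotientE)
    then have "g p = j" using f(2) by (metis g_def inv_f_f)
    then show ?thesis ..
  qed
  then have "surj g" by (metis surj_def)
  moreover have "g p = g q" if "(p, q) \<in> E" for p q
    using equiv_class_eq[OF equiv r_into_rtrancl[OF that]] by (simp add: g_def)
  ultimately show thesis using that by blast
qed

lemma graph_adj_sym_edge_rel: "graph_adj B \<Longrightarrow> sym (edge_rel B)"
  by (auto simp: sym_def edge_rel_def graph_adj_sym)

(* With w = deg B, column j is the normalised vector D^(1/2) 1_R for the class R = g^-1(j). *)

definition partition_matrix ::
    "('n::finite \<Rightarrow> 'k::finite) \<Rightarrow> ('n \<Rightarrow> real) \<Rightarrow> real^'k^'n" where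
  "partition_matrix g w =
     (\<chi> p j. if g p = j then sqrt (w p) / sqrt (\<Sum>q\<in>{q. g q = j}. w q) else 0)"

lemma sum_fiber_pos:
  fixes g :: "'n::finite \<Rightarrow> 'k" and w :: "'n \<Rightarrow> real"
  assumes "surj g" and "\<And>p. w p > 0"
  shows "(\<Sum>q\<in>{q. g q = j}. w q) > 0"
proof -
  obtain p where "g p = j" using assms(1) by (metis surjD)
  then show ?thesis using assms(2) by (intro sum_pos) auto
qed

lemma partition_matrix_in_O_I_plus:
  fixes g :: "'n::finite \<Rightarrow> 'k::finite"
  assumes g: "surj g" and w: "\<And>p. w p > 0"
  shows "partition_matrix g w \<in> O_I_plus"
proof -
  let ?X = "partition_matrix g w"
  let ?S = "\<lambda>j. \<Sum>q\<in>{q. g q = j}. w q"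
  have S: "?S j > 0" for j by (rule sum_fiber_pos[OF g w])
  have "indicator_form ?X"
    unfolding indicator_form_def
  proof (intro exI[of _ "\<lambda>j. {p. g p = j}"] conjI allI impI)
    show "{p. g p = j} \<noteq> {}" for j
      using surjD[OF g, of j] by auto
    show "?X $ p $ j \<noteq> 0 \<longleftrightarrow> p \<in> {p. g p = j}" for p j
      using S[of j] w[of p] by (simp add: partition_matrix_def)
    show "{p. g p = i} \<inter> {p. g p = j} = {}" if "i \<noteq> j" for i j
      using that by auto
    show "(\<Union>j. {p. g p = j}) = UNIV"
      by auto
  qed
  moreover have "(\<Sum>p\<in>UNIV. ?X$p$i * ?X$p$j) = (if i = j then 1 else 0)" for i j
  proof -
    have "?X$p$i * ?X$p$j = (if g p = j \<and> i = j then w p / ?S j else 0)" for p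
    proof (cases "g p = j \<and> i = j")
      case True
      have "(sqrt (w p) / sqrt (?S j))\<^sup>2 = w p / ?S j"
        using S[of j] w[of p] by (simp add: power_divide)
      then show ?thesis using True by (simp add: partition_matrix_def power2_eq_square)
    qed (auto simp: partition_matrix_def)
    then have "(\<Sum>p\<in>UNIV. ?X$p$i * ?X$p$j) =
        (\<Sum>p\<in>UNIV. if g p = j \<and> i = j then w p / ?S j else 0)"
      by simp
    also have "\<dots> = (if i = j then 1 else 0)"
      using S[of j] by (simp add: sum.inter_filter[symmetric] sum_divide_distrib[symmetric])
    finally show ?thesis .
  qed
  moreover have "?X $ p $ j \<ge> 0" for p j
    using w by (simp add: partition_matrix_def less_imp_le sum_nonneg)
  ultimately show ?thesis
    by (simp add: O_I_plus_def O_I_def transpose_mult_self_eq_mat_1_iff)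
qed

lemma norm_adj_partition_matrix:
  fixes B :: "real^'n::finite^'n" and g :: "'n \<Rightarrow> 'k::finite"
  assumes B: "graph_adj B" and g: "surj g" and edge: "\<And>p q. B$p$q \<noteq> 0 \<Longrightarrow> g p = g q"
  defines "X \<equiv> partition_matrix g (\<lambda>p. deg B $ p)"
  shows "transpose X ** norm_adj B ** X = mat 1"
proof -
  have "X \<in> O_I_plus" unfolding X_def by (rule partition_matrix_in_O_I_plus[OF g deg_pos[OF B]])
  then have orth: "transpose X ** X = mat 1" by (simp add: O_I_plus_def O_I_def)
  have "(transpose X ** norm_adj B ** X) $ a $ b = mat 1 $ a $ b" for a b
  proof (cases "a = b")
    case False
    have "X$p$a * norm_adj B $p$q * X$q$b = 0" for p q
      using edge[of p q] False by (auto simp: X_def partition_matrix_def norm_adj_def)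
    then show ?thesis using False by (simp only: transpose_mult_mult_entry) (simp add: mat_def)
  next
    case True
    have "X$p$a / sqrt (deg B $ p) =
        (if g p = a then 1 / sqrt (\<Sum>q\<in>{q. g q = a}. deg B $ q) else 0)" for p
      using deg_pos[OF B, of p] by (simp add: X_def partition_matrix_def)
    then have "dirichlet_energy B (\<lambda>p. X$p$a) = 0"
      using edge by (simp add: dirichlet_energy_eq_0_iff[OF B])
    moreover have "(\<Sum>p\<in>UNIV. (X$p$a)\<^sup>2) = 1"
      using orth by (simp add: transpose_mult_self_eq_mat_1_iff power2_eq_square)
    ultimately show ?thesis
      using diag_defect_eq_dirichlet_energy[OF B, of X a] True by simp
  qed
  then show ?thesis by (simp add: vec_eq_iff)
qed

section \<open>Vanishing of the infimum\<close>

(* O_I_plus is not closed (supports may shrink in a limit), so minimisers are sought in this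
   compact superset. *)

definition nonneg_orthonormal :: "(real^'k::finite^'n::finite) set" where
  "nonneg_orthonormal = {X. (\<forall>p j. 0 \<le> X$p$j) \<and> transpose X ** X = mat 1}"

lemma O_I_plus_subset_nonneg_orthonormal: "O_I_plus \<subseteq> nonneg_orthonormal"
  by (auto simp: O_I_plus_def O_I_def nonneg_orthonormal_def)

lemma compact_nonneg_orthonormal: "compact (nonneg_orthonormal :: (real^'k::finite^'n::finite) set)"
  unfolding compact_eq_bounded_closed
proof
  show "bounded (nonneg_orthonormal :: (real^'k^'n) set)"
    unfolding bounded_iff nonneg_orthonormal_def
    by (auto simp: norm_eq_sqrt_card_if_orthonormal_columns)
  show "closed (nonneg_orthonormal :: (real^'k^'n) set)"
    unfolding nonneg_orthonormal_def transpose_mult_self_eq_mat_1_iff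
    by (intro closed_Collect_conj closed_Collect_all closed_Collect_le closed_Collect_eq
        continuous_intros)
qed

lemma trace_defect_eq_sum:
  fixes X :: "real^'k::finite^'n::finite"
  shows "trace (mat 1 - transpose X ** A ** X) =
    (\<Sum>j\<in>UNIV. 1 - (\<Sum>p\<in>UNIV. \<Sum>q\<in>UNIV. X$p$j * A$p$q * X$q$j))"
  unfolding trace_def by (simp only: vector_minus_component transpose_mult_mult_entry) (simp add: mat_def)

lemma continuous_on_trace_defect:
  "continuous_on S (\<lambda>X :: real^'k::finite^'n::finite. trace (mat 1 - transpose X ** A ** X))"
  unfolding trace_defect_eq_sum by (intro continuous_intros)

lemma trace_defect_nonneg:
  fixes X :: "real^'k::finite^'n::finite"
  assumes "graph_adj B" and "transpose X ** X = mat 1"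
  shows "0 \<le> trace (mat 1 - transpose X ** norm_adj B ** X)"
  unfolding trace_defect_eq_dirichlet_energy[OF assms]
  by (intro divide_nonneg_pos sum_nonneg dirichlet_energy_nonneg[OF assms(1)]) auto

lemma card_components_ge_if_trace_defect_eq_0:
  fixes B :: "real^'n::finite^'n" and X :: "real^'k::finite^'n"
  assumes B: "graph_adj B" and X: "X \<in> nonneg_orthonormal"
    and defect: "trace (mat 1 - transpose X ** norm_adj B ** X) = 0"
  shows "CARD('k) \<le> card (components B)"
proof -
  have nonneg: "0 \<le> X$p$j" for p j using X by (simp add: nonneg_orthonormal_def)
  have orth: "(\<Sum>p\<in>UNIV. X$p$i * X$p$j) = (if i = j then 1 else 0)" for i j
    using X by (simp add: nonneg_orthonormal_def transpose_mult_self_eq_mat_1_iff)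
  have "dirichlet_energy B (\<lambda>p. X$p$j) = 0" for j
    using defect X dirichlet_energy_nonneg[OF B]
    by (simp add: nonneg_orthonormal_def trace_defect_eq_dirichlet_energy[OF B] sum_nonneg_eq_0_iff)
  then have edge: "X$p$j / sqrt (deg B $ p) = X$q$j / sqrt (deg B $ q)" if "B$p$q \<noteq> 0" for p q j
    using that by (simp add: dirichlet_energy_eq_0_iff[OF B])
  define T where "T j = {p. X$p$j \<noteq> 0}" for j
  have "CARD('k) \<le> card (UNIV // (edge_rel B)\<^sup>*)"
  proof (rule card_quotient_rtrancl_ge[of T])
    show "T j \<noteq> {}" for j
    proof
      assume "T j = {}"
      then have "\<forall>p. X$p$j = 0" by (auto simp: T_def)
      then show False using orth[of j j] by simp
    qed
    show "T i \<inter> T j = {}" if "i \<noteq> j" for i j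
    proof -
      have "\<forall>p\<in>UNIV. X$p$i * X$p$j = 0"
        using orth[of i j] that nonneg by (simp add: sum_nonneg_eq_0_iff)
      then show ?thesis by (auto simp: T_def)
    qed
    show "edge_rel B `` T j \<subseteq> T j" for j
    proof
      fix q assume "q \<in> edge_rel B `` T j"
      then obtain p where "p \<in> T j" and "B$p$q \<noteq> 0" by (auto simp: edge_rel_def)
      then show "q \<in> T j"
        using edge[of p q j] deg_pos[OF B, of p] deg_pos[OF B, of q] by (auto simp: T_def)
    qed
  qed
  then show ?thesis by (simp add: components_def)
qed

lemma O_I_plus_nonempty:
  assumes "CARD('k::finite) \<le> CARD('n::finite)"
  shows "(O_I_plus :: (real^'k^'n) set) \<noteq> {}"
proof -
  obtain h :: "'k \<Rightarrow> 'n" where "inj h"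
    using card_le_inj[of "UNIV :: 'k set" "UNIV :: 'n set"] assms by auto
  then have "partition_matrix (inv h) (\<lambda>_. 1) \<in> (O_I_plus :: (real^'k^'n) set)"
    by (intro partition_matrix_in_O_I_plus inj_imp_surj_inv) auto
  then show ?thesis by blast
qed

lemma Phi_cut_G_nonneg:
  fixes A :: "real^'n::finite^'n"
  shows "(O_I_plus :: (real^'k::finite^'n) set) \<noteq> {} \<Longrightarrow> 0 \<le> Phi_cut_G A TYPE('k)"
  unfolding Phi_cut_G_def Phi_cut_def by (intro cINF_greatest) auto

lemma Phi_cut_G_eq_0_if_k_partitionable:
  fixes B :: "real^'n::finite^'n"
  assumes B: "graph_adj B" and "k_partitionable B CARD('k::finite)"
  shows "Phi_cut_G (norm_adj B) TYPE('k) = 0"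
proof -
  obtain g :: "'n \<Rightarrow> 'k" where g: "surj g"
    and edge: "\<And>p q. (p, q) \<in> edge_rel B \<Longrightarrow> g p = g q"
    using surj_constant_on_edges_if_card_quotient_ge[OF graph_adj_sym_edge_rel[OF B]] assms(2)
    by (auto simp: k_partitionable_def components_def)
  define X where "X = partition_matrix g (\<lambda>p. deg B $ p)"
  have X: "X \<in> O_I_plus"
    unfolding X_def by (rule partition_matrix_in_O_I_plus[OF g deg_pos[OF B]])
  have "Phi_cut (norm_adj B) X = 0"
    using norm_adj_partition_matrix[OF B g] edge by (simp add: Phi_cut_def X_def edge_rel_def)
  then have "Phi_cut_G (norm_adj B) TYPE('k) \<le> 0"
    unfolding Phi_cut_G_def
    by (metis X cINF_lower bdd_belowI2 Phi_cut_def norm_ge_zero)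
  moreover have "0 \<le> Phi_cut_G (norm_adj B) TYPE('k)"
    using X by (intro Phi_cut_G_nonneg) auto
  ultimately show ?thesis by simp
qed

lemma k_partitionable_if_Phi_cut_G_eq_0:
  fixes B :: "real^'n::finite^'n"
  assumes B: "graph_adj B" and nonempty: "(O_I_plus :: (real^'k::finite^'n) set) \<noteq> {}"
    and zero: "Phi_cut_G (norm_adj B) TYPE('k) = 0"
  shows "k_partitionable B CARD('k)"
proof -
  let ?t = "\<lambda>X :: real^'k^'n. trace (mat 1 - transpose X ** norm_adj B ** X)"
  obtain X0 where X0: "X0 \<in> nonneg_orthonormal"
    and min: "\<And>X. X \<in> nonneg_orthonormal \<Longrightarrow> ?t X0 \<le> ?t X"
    using continuous_attains_inf[OF compact_nonneg_orthonormal _ continuous_on_trace_defect]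
      nonempty O_I_plus_subset_nonneg_orthonormal by blast
  have "?t X0 / real CARD('k) \<le> Phi_cut (norm_adj B) X" if "X \<in> O_I_plus" for X :: "real^'k^'n"
  proof -
    have "?t X0 \<le> ?t X" using min O_I_plus_subset_nonneg_orthonormal that by blast
    also have "\<dots> \<le> real CARD('k) * Phi_cut (norm_adj B) X"
      unfolding Phi_cut_def by (rule trace_le_card_mult_norm)
    finally show ?thesis by (simp add: field_simps)
  qed
  then have "?t X0 / real CARD('k) \<le> 0"
    using zero nonempty unfolding Phi_cut_G_def by (metis cINF_greatest)
  moreover have "0 \<le> ?t X0"
    using X0 by (intro trace_defect_nonneg[OF B]) (simp add: nonneg_orthonormal_def)
  ultimately have "?t X0 = 0" by (simp add: divide_le_0_iff)
  then show ?thesis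
    using card_components_ge_if_trace_defect_eq_0[OF B X0] by (simp add: k_partitionable_def)
qed

lemma L_k_le_Phi_cut_G:
  fixes A :: "real^'n::finite^'n"
  assumes "(O_I_plus :: (real^'k::finite^'n) set) \<noteq> {}"
  shows "L_k A TYPE('k) \<le> Phi_cut_G A TYPE('k)"
  unfolding L_k_def Phi_cut_G_def Phi_cut_def
  by (rule cINF_superset_mono[OF assms]) (auto simp: O_I_plus_def O_I_def intro!: bdd_belowI[of _ 0])

theorem proposition3:
  fixes B :: "real^'n::finite^'n"
  assumes "graph_adj B"
    and "CARD('k::finite) \<le> CARD('n)"
  shows "(\<forall>X \<in> (O_I_plus :: (real^'k^'n) set). Phi_cut (norm_adj B) X \<ge> 0
            \<and> (\<forall>P. perm_matrix P \<longrightarrow>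
                   Phi_cut (P ** norm_adj B ** transpose P) (P ** X) = Phi_cut (norm_adj B) X))
       \<and> (Phi_cut_G (norm_adj B) TYPE('k) = 0 \<longleftrightarrow> k_partitionable B CARD('k))
       \<and> L_k (norm_adj B) TYPE('k) \<le> Phi_cut_G (norm_adj B) TYPE('k)"
proof -
  have nonempty: "(O_I_plus :: (real^'k^'n) set) \<noteq> {}"
    by (rule O_I_plus_nonempty[OF assms(2)])
  show ?thesis
    using Phi_cut_orthogonal_conj[OF perm_matrix_orthogonal]
      Phi_cut_G_eq_0_if_k_partitionable[OF assms(1)]
      k_partitionable_if_Phi_cut_G_eq_0[OF assms(1) nonempty]
      L_k_le_Phi_cut_G[OF nonempty]
    by (auto simp: Phi_cut_def)
qed

end
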